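(* Let $\Omega$ be a Keplerian branch around ${\rm O}$ in the plane ${\rm O}xy$ with equation $r=\alpha x+\beta y+\gamma$, $\gamma>0$, which possesses a horizontal chord (two distinct points of $\Omega$ with the same ordinate). Then there is a unique triple $(\phi,M,N)\in\,]0,\pi[\times\mathbb{R}\times\,]0,+\infty[$ such that $\Omega$ is the image of the vertical branch $\Sigma$ with equation $r=My+N$ by the affine map $(x_1,y_1)\mapsto(x_3,y_3)$ defined by $x_1=x_3-M\frac{\cos\phi}{\sin\phi}y_3-N\cos\phi$, $y_1=\frac{1}{\sin\phi}y_3$.
   Context: In the Euclidean plane ${\rm O}xy$, $r=\sqrt{x^2+y^2}$. A Keplerian branch around ${\rm O}$ is the image of a solution of Newton's system $\ddot q=-q/\|q\|^3$ (extended through collisions by bouncing back along the same ray with the same energy). For $\gamma>0$, the set of points satisfying $r=\alpha x+\beta y+\gamma$ is an (irreducible) Keplerian branch around ${\rm O}$. *)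

theory Defs
  imports Complex_Main
begin

definition kepler_branch :: "real \<Rightarrow> real \<Rightarrow> real \<Rightarrow> (real \<times> real) set" where
  "kepler_branch \<alpha> \<beta> \<gamma> = {(x, y). sqrt (x\<^sup>2 + y\<^sup>2) = \<alpha> * x + \<beta> * y + \<gamma>}"

definition vertical_branch :: "real \<Rightarrow> real \<Rightarrow> (real \<times> real) set" where
  "vertical_branch M N = kepler_branch 0 M N"

definition affine_image :: "real \<Rightarrow> real \<Rightarrow> real \<Rightarrow> (real \<times> real) set \<Rightarrow> (real \<times> real) set" where
  "affine_image \<phi> M N S = {(x3, y3). \<exists>x1 y1. (x1, y1) \<in> S \<and>
      x1 = x3 - M * (cos \<phi> / sin \<phi>) * y3 - N * cos \<phi> \<and> y1 = y3 / sin \<phi>}"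

end

theory Submission
  imports Defs
begin

text \<open>For \<open>\<phi> \<in> ]0,\<pi>[\<close> the affine map sends the vertical branch \<open>r = M y + N\<close>
  onto the branch \<open>r = cos \<phi> x + sin \<phi> M y + sin\<^sup>2 \<phi> N\<close>: after squaring both equations
  differ by the factor \<open>sin\<^sup>2 \<phi>\<close>, and the sign conditions agree. A branch with \<open>\<gamma> > 0\<close>
  determines its coefficients as soon as \<open>|\<alpha>| < 1\<close>, because it then contains three
  non-collinear points on the axes. Finally a horizontal chord forces \<open>|\<alpha>| < 1\<close>: on a
  horizontal line \<open>r\<close> is 1-Lipschitz in \<open>x\<close>, and for \<open>|\<alpha>| = 1\<close> the branch is a parabola
  with horizontal axis. So \<open>\<phi> = arccos \<alpha>\<close>, \<open>M = \<beta> / sin \<phi>\<close>, \<open>N = \<gamma> / sin\<^sup>2 \<phi>\<close> is the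
  only choice.\<close>

lemma mem_kepler_branch_iff:
  "(x, y) \<in> kepler_branch a b g \<longleftrightarrow>
     x\<^sup>2 + y\<^sup>2 = (a * x + b * y + g)\<^sup>2 \<and> 0 \<le> a * x + b * y + g"
proof -
  have "sqrt z = w \<longleftrightarrow> z = w\<^sup>2 \<and> 0 \<le> w" if "0 \<le> z" for z w :: real
    using that real_sqrt_unique by auto
  then show ?thesis
    unfolding kepler_branch_def by simp
qed

lemma kepler_branch_swap:
  "(x, y) \<in> kepler_branch a b g \<longleftrightarrow> (y, x) \<in> kepler_branch b a g"
  unfolding kepler_branch_def by (simp add: ac_simps)

lemma kepler_branch_pos_x_axis:
  assumes "a < 1" "0 \<le> g"
  shows "(g / (1 - a), 0) \<in> kepler_branch a b g"
proof -
  have "a * (g / (1 - a)) + g = g / (1 - a)"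
    using assms(1) by (simp add: field_simps)
  then show ?thesis
    using assms unfolding kepler_branch_def by simp
qed

lemma kepler_branch_neg_x_axis:
  assumes "- 1 < a" "0 \<le> g"
  shows "(- g / (1 + a), 0) \<in> kepler_branch a b g"
proof -
  have "a * (- g / (1 + a)) + g = g / (1 + a)"
    using assms(1) by (simp add: field_simps)
  then show ?thesis
    using assms unfolding kepler_branch_def by simp
qed

lemma kepler_branch_on_y_axis:
  assumes "0 < g"
  obtains q where "q \<noteq> 0" "(0, q) \<in> kepler_branch a b g"
proof (cases "b < 1")
  case True
  then have "(g / (1 - b), 0) \<in> kepler_branch b a g"
    using assms by (intro kepler_branch_pos_x_axis) simp_all
  then show ?thesis
    using that[of "g / (1 - b)"] kepler_branch_swap True assms by simp
next
  case False
  then have "(- g / (1 + b), 0) \<in> kepler_branch b a g"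
    using assms by (intro kepler_branch_neg_x_axis) simp_all
  then show ?thesis
    using that[of "- g / (1 + b)"] kepler_branch_swap False assms by simp
qed

lemma kepler_branch_coeffs_unique:
  assumes eq: "kepler_branch a b g = kepler_branch a' b' g'" and "\<bar>a\<bar> < 1" "0 < g"
  shows "a = a' \<and> b = b' \<and> g = g'"
proof -
  have vanish: "(a - a') * x + (b - b') * y + (g - g') = 0"
    if "(x, y) \<in> kepler_branch a b g" for x y
  proof -
    have "(x, y) \<in> kepler_branch a' b' g'"
      using that eq by simp
    then show ?thesis
      using that unfolding kepler_branch_def by (simp add: algebra_simps)
  qed
  define p1 where "p1 = g / (1 - a)"
  define p2 where "p2 = - g / (1 + a)"
  have "(p1, 0) \<in> kepler_branch a b g" and "(p2, 0) \<in> kepler_branch a b g"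
    unfolding p1_def p2_def using assms(2,3)
      kepler_branch_pos_x_axis[of a g b] kepler_branch_neg_x_axis[of a g b]
    by (simp_all add: abs_less_iff)
  from this[THEN vanish]
  have e1: "(a - a') * p1 + (g - g') = 0" and e2: "(a - a') * p2 + (g - g') = 0"
    by simp_all
  have "p2 < 0" "0 < p1"
    using assms(2,3) unfolding p1_def p2_def by (simp_all add: divide_neg_pos)
  then have "p1 - p2 \<noteq> 0"
    by linarith
  moreover have "(a - a') * (p1 - p2) = 0"
    using e1 e2 by (simp add: algebra_simps)
  ultimately have "a = a'"
    by simp
  moreover have "g = g'"
    using e1 \<open>a = a'\<close> by simp
  moreover obtain q where "q \<noteq> 0" and "(0, q) \<in> kepler_branch a b g"
    using kepler_branch_on_y_axis[OF assms(3)] .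
  then have "(b - b') * q = 0"
    using vanish \<open>a = a'\<close> \<open>g = g'\<close> by fastforce
  ultimately show ?thesis
    using \<open>q \<noteq> 0\<close> by simp
qed

lemma shear_identity:
  fixes c s x y u :: real
  assumes "c\<^sup>2 + s\<^sup>2 = 1" "s \<noteq> 0"
  shows "s\<^sup>2 * ((x - c * u)\<^sup>2 + (y / s)\<^sup>2 - u\<^sup>2) = x\<^sup>2 + y\<^sup>2 - (c * x + s\<^sup>2 * u)\<^sup>2"
proof -
  have "s\<^sup>2 * ((x - c * u)\<^sup>2 + (y / s)\<^sup>2 - u\<^sup>2) = s\<^sup>2 * (x - c * u)\<^sup>2 + y\<^sup>2 - s\<^sup>2 * u\<^sup>2"
    using assms(2) by (simp add: field_simps power2_eq_square)
  also have "\<dots> = x\<^sup>2 + y\<^sup>2 - (c * x + s\<^sup>2 * u)\<^sup>2"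
    using assms(1) by algebra
  finally show ?thesis .
qed

lemma nonneg_iff_on_cone:
  fixes c s x y u :: real
  assumes "c\<^sup>2 + s\<^sup>2 = 1" "s \<noteq> 0" and cone: "x\<^sup>2 + y\<^sup>2 = (c * x + s\<^sup>2 * u)\<^sup>2"
  shows "0 \<le> c * x + s\<^sup>2 * u \<longleftrightarrow> 0 \<le> u"
proof -
  define w where "w = c * x + s\<^sup>2 * u"
  have s2: "0 < s\<^sup>2"
    using assms(2) by simp
  have "c\<^sup>2 < 1"
    using assms(1) s2 by linarith
  then have c: "\<bar>c\<bar> < 1"
    by (simp add: abs_square_less_1)
  have "\<bar>x\<bar> \<le> sqrt (x\<^sup>2 + y\<^sup>2)"
    by (rule real_sqrt_ge_abs1)
  also have "\<dots> = \<bar>w\<bar>"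
    using cone unfolding w_def by simp
  finally have x_le_w: "\<bar>x\<bar> \<le> \<bar>w\<bar>" .
  have cx: "\<bar>c * x\<bar> \<le> \<bar>c\<bar> * \<bar>x\<bar>" "\<bar>c\<bar> * \<bar>x\<bar> \<le> \<bar>x\<bar>"
    using c by (simp_all add: abs_mult mult_left_le_one_le)
  show ?thesis
  proof
    assume "0 \<le> c * x + s\<^sup>2 * u"
    then have "0 \<le> s\<^sup>2 * u"
      using x_le_w cx unfolding w_def by linarith
    then show "0 \<le> u"
      using s2 by (simp add: zero_le_mult_iff)
  next
    assume u: "0 \<le> u"
    show "0 \<le> c * x + s\<^sup>2 * u"
    proof (rule ccontr)
      assume neg: "\<not> 0 \<le> c * x + s\<^sup>2 * u"
      moreover have "0 \<le> s\<^sup>2 * u"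
        using u by simp
      ultimately have "(1 - \<bar>c\<bar>) * \<bar>x\<bar> \<le> 0"
        using x_le_w cx unfolding w_def by (simp add: algebra_simps)
      then have "x = 0"
        using c by (simp add: mult_le_0_iff)
      then show False
        using neg \<open>0 \<le> s\<^sup>2 * u\<close> by simp
    qed
  qed
qed

lemma affine_image_vertical_branch:
  assumes "sin \<phi> \<noteq> 0"
  shows "affine_image \<phi> M N (vertical_branch M N)
           = kepler_branch (cos \<phi>) (sin \<phi> * M) (N * (sin \<phi>)\<^sup>2)"
proof -
  define c s where "c = cos \<phi>" and "s = sin \<phi>"
  have cs: "c\<^sup>2 + s\<^sup>2 = 1" and s: "s \<noteq> 0"
    using assms unfolding c_def s_def by (simp_all add: add.commute)
  have "(x - M * (c / s) * y - N * c, y / s) \<in> kepler_branch 0 M N \<longleftrightarrow>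
        (x, y) \<in> kepler_branch c (s * M) (N * s\<^sup>2)" for x y
  proof -
    define u w where "u = M * (y / s) + N" and "w = c * x + s\<^sup>2 * u"
    have shift: "x - M * (c / s) * y - N * c = x - c * u"
      and w_eq: "c * x + s * M * y + N * s\<^sup>2 = w"
      using s unfolding u_def w_def by (simp_all add: field_simps power2_eq_square)
    then have "(x - M * (c / s) * y - N * c, y / s) \<in> kepler_branch 0 M N \<longleftrightarrow>
               (x - c * u)\<^sup>2 + (y / s)\<^sup>2 = u\<^sup>2 \<and> 0 \<le> u"
      unfolding shift mem_kepler_branch_iff by (simp add: u_def)
    also have "\<dots> \<longleftrightarrow> s\<^sup>2 * ((x - c * u)\<^sup>2 + (y / s)\<^sup>2 - u\<^sup>2) = 0 \<and> 0 \<le> u"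
      using s by simp
    also have "\<dots> \<longleftrightarrow> x\<^sup>2 + y\<^sup>2 = w\<^sup>2 \<and> 0 \<le> u"
      unfolding shear_identity[OF cs s] w_def by simp
    also have "\<dots> \<longleftrightarrow> x\<^sup>2 + y\<^sup>2 = w\<^sup>2 \<and> 0 \<le> w"
      using nonneg_iff_on_cone[OF cs s, of x y u] unfolding w_def by blast
    also have "\<dots> \<longleftrightarrow> (x, y) \<in> kepler_branch c (s * M) (N * s\<^sup>2)"
      unfolding mem_kepler_branch_iff w_eq[symmetric] by (simp add: mult.assoc)
    finally show ?thesis .
  qed
  moreover have "affine_image \<phi> M N S = {(x, y). (x - M * (c / s) * y - N * c, y / s) \<in> S}"
    for S
    unfolding affine_image_def c_def s_def by auto
  ultimately show ?thesis
    unfolding vertical_branch_def c_def s_def by auto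
qed

lemma abs_sqrt_sum_sq_diff_le:
  fixes x1 x2 y :: real
  shows "\<bar>sqrt (x1\<^sup>2 + y\<^sup>2) - sqrt (x2\<^sup>2 + y\<^sup>2)\<bar> \<le> \<bar>x1 - x2\<bar>"
proof -
  have "\<bar>cmod (Complex x1 y) - cmod (Complex x2 y)\<bar> \<le> cmod (Complex x1 y - Complex x2 y)"
    by (rule norm_triangle_ineq3)
  moreover have "Complex x1 y - Complex x2 y = of_real (x1 - x2)"
    by (simp add: complex_eq_iff)
  ultimately show ?thesis
    by (simp only: complex_norm norm_of_real)
qed

lemma horizontal_chord_imp_abs_lt_1:
  assumes "0 < g" "x1 \<noteq> x2"
    and on_branch: "(x1, y) \<in> kepler_branch a b g" "(x2, y) \<in> kepler_branch a b g"
  shows "\<bar>a\<bar> < 1"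
proof -
  have "\<bar>a * (x1 - x2)\<bar> \<le> \<bar>x1 - x2\<bar>"
    using abs_sqrt_sum_sq_diff_le[of x1 y x2] on_branch
    unfolding kepler_branch_def by (simp add: algebra_simps)
  then have "\<bar>a\<bar> \<le> 1"
    using assms(2) by (simp add: abs_mult)
  moreover have "\<bar>a\<bar> \<noteq> 1"
  proof
    assume "\<bar>a\<bar> = 1"
    then have a2: "a\<^sup>2 = 1"
      by (metis power2_abs power_one)
    define k where "k = b * y + g"
    \<comment> \<open>for \<open>a\<^sup>2 = 1\<close> the squared equation is linear in \<open>x\<close>\<close>
    have "y\<^sup>2 - k\<^sup>2 = 2 * a * k * x" if "x\<^sup>2 + y\<^sup>2 = (a * x + b * y + g)\<^sup>2" for x
      using that a2 unfolding k_def by algebra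
    then have "2 * a * k * x1 = 2 * a * k * x2" "y\<^sup>2 = k\<^sup>2 + 2 * a * k * x1"
      using on_branch unfolding mem_kepler_branch_iff by (metis, fastforce)
    then have "k = 0" "y = 0"
      using assms(2) \<open>\<bar>a\<bar> = 1\<close> by auto
    then show False
      using assms(1) unfolding k_def by simp
  qed
  ultimately show ?thesis by simp
qed

lemma kepler_branch_eq_affine_image_vertical_branch_iff:
  assumes \<alpha>: "\<bar>\<alpha>\<bar> < 1" and "0 < \<gamma>"
  shows "\<phi> \<in> {0<..<pi} \<and> N > 0 \<and>
           kepler_branch \<alpha> \<beta> \<gamma> = affine_image \<phi> M N (vertical_branch M N) \<longleftrightarrow>
         \<phi> = arccos \<alpha> \<and> M = \<beta> / sin (arccos \<alpha>) \<and> N = \<gamma> / (sin (arccos \<alpha>))\<^sup>2"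
proof
  assume "\<phi> \<in> {0<..<pi} \<and> N > 0 \<and>
            kepler_branch \<alpha> \<beta> \<gamma> = affine_image \<phi> M N (vertical_branch M N)"
  then have \<phi>: "\<phi> \<in> {0<..<pi}" and "sin \<phi> > 0"
    and "kepler_branch \<alpha> \<beta> \<gamma> = kepler_branch (cos \<phi>) (sin \<phi> * M) (N * (sin \<phi>)\<^sup>2)"
    using affine_image_vertical_branch[of \<phi> M N] sin_gt_zero[of \<phi>] by auto
  then have "\<alpha> = cos \<phi>" "\<beta> = sin \<phi> * M" "\<gamma> = N * (sin \<phi>)\<^sup>2"
    using kepler_branch_coeffs_unique \<alpha> assms(2) by blast+
  then show "\<phi> = arccos \<alpha> \<and> M = \<beta> / sin (arccos \<alpha>) \<and> N = \<gamma> / (sin (arccos \<alpha>))\<^sup>2"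
    using \<phi> \<open>sin \<phi> > 0\<close> by (simp add: arccos_cos)
next
  assume "\<phi> = arccos \<alpha> \<and> M = \<beta> / sin (arccos \<alpha>) \<and> N = \<gamma> / (sin (arccos \<alpha>))\<^sup>2"
  moreover have "arccos \<alpha> \<in> {0<..<pi}" and "cos (arccos \<alpha>) = \<alpha>"
    using \<alpha> arccos_lt_bounded[of \<alpha>] by auto
  moreover have "sin (arccos \<alpha>) > 0"
    using \<open>arccos \<alpha> \<in> {0<..<pi}\<close> sin_gt_zero by auto
  ultimately show "\<phi> \<in> {0<..<pi} \<and> N > 0 \<and>
                   kepler_branch \<alpha> \<beta> \<gamma> = affine_image \<phi> M N (vertical_branch M N)"
    using assms(2) affine_image_vertical_branch[of \<phi> M N] by simp
qed

theorem lemma7: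
  fixes \<alpha> \<beta> \<gamma> :: real
  assumes "\<gamma> > 0"
    and "\<exists>p\<in>kepler_branch \<alpha> \<beta> \<gamma>. \<exists>q\<in>kepler_branch \<alpha> \<beta> \<gamma>. p \<noteq> q \<and> snd p = snd q"
  shows "\<exists>!t :: real \<times> real \<times> real. case t of (\<phi>, M, N) \<Rightarrow>
           \<phi> \<in> {0<..<pi} \<and> N > 0 \<and>
           kepler_branch \<alpha> \<beta> \<gamma> = affine_image \<phi> M N (vertical_branch M N)"
proof -
  obtain p q where "p \<in> kepler_branch \<alpha> \<beta> \<gamma>" "q \<in> kepler_branch \<alpha> \<beta> \<gamma>"
      and "p \<noteq> q" "snd p = snd q"
    using assms(2) by blast
  then have \<alpha>: "\<bar>\<alpha>\<bar> < 1"
    using horizontal_chord_imp_abs_lt_1[OF assms(1), of "fst p" "fst q" "snd p" \<alpha> \<beta>]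
    by (cases p, cases q) simp
  define \<phi>\<^sub>0 where "\<phi>\<^sub>0 = arccos \<alpha>"
  have "(case t of (\<phi>, M, N) \<Rightarrow> \<phi> \<in> {0<..<pi} \<and> N > 0 \<and>
          kepler_branch \<alpha> \<beta> \<gamma> = affine_image \<phi> M N (vertical_branch M N)) \<longleftrightarrow>
        t = (\<phi>\<^sub>0, \<beta> / sin \<phi>\<^sub>0, \<gamma> / (sin \<phi>\<^sub>0)\<^sup>2)" for t
    using kepler_branch_eq_affine_image_vertical_branch_iff[OF \<alpha> assms(1)]
    unfolding \<phi>\<^sub>0_def by (cases t) auto
  then show ?thesis
    by simp
qed

end
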